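(* Let $X$ be a real normed linear space and let $\varepsilon\in[0,2)$. (1) If $X^*$ is $\varepsilon$-smooth, then $X$ is $\varepsilon$-rotund. (2) If $X^*$ is $\varepsilon$-rotund, then $X$ is $\varepsilon$-smooth. (3) If $X$ is reflexive, then $X$ is $\varepsilon$-smooth if and only if $X^*$ is $\varepsilon$-rotund, and $X$ is $\varepsilon$-rotund if and only if $X^*$ is $\varepsilon$-smooth.
   Context: For a normed space $Z$ and $z\in Z\setminus\{\theta\}$, $J(z)=\{\phi\in S_{Z^*}:\phi(z)=\|z\|\}$; $Z$ is $\varepsilon$-smooth if $\operatorname{diam}J(z)=\sup_{\phi,\psi\in J(z)}\|\phi-\psi\|\le\varepsilon$ for every $z\in S_Z$. $Z$ is $\varepsilon$-rotund if for every $\phi\in S_{Z^*}$, $\operatorname{diam}\{z\in S_Z:\phi(z)=1\}\le\varepsilon$. These notions are applied to $X$ and to its dual $X^*$ (whose dual is $X^{**}$). *)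

theory Defs
  imports "HOL-Analysis.Analysis"
begin

(* The dual of 'a is the type of bounded linear functionals 'a =>L real, operator norm. *)

definition duality_set :: "'a::real_normed_vector \<Rightarrow> ('a \<Rightarrow>\<^sub>L real) set" where
  "duality_set z = {\<phi>. norm \<phi> = 1 \<and> blinfun_apply \<phi> z = norm z}"

definition eps_smooth :: "real \<Rightarrow> 'a::real_normed_vector itself \<Rightarrow> bool" where
  "eps_smooth \<epsilon> _ \<longleftrightarrow> (\<forall>z::'a. norm z = 1 \<longrightarrow> diameter (duality_set z) \<le> \<epsilon>)"

definition eps_rotund :: "real \<Rightarrow> 'a::real_normed_vector itself \<Rightarrow> bool" where
  "eps_rotund \<epsilon> _ \<longleftrightarrow>
     (\<forall>\<phi>::'a \<Rightarrow>\<^sub>L real. norm \<phi> = 1 \<longrightarrow>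
        diameter {z::'a. norm z = 1 \<and> blinfun_apply \<phi> z = 1} \<le> \<epsilon>)"

definition canon_embed :: "'a::real_normed_vector \<Rightarrow> (('a \<Rightarrow>\<^sub>L real) \<Rightarrow>\<^sub>L real)" where
  "canon_embed x = Blinfun (\<lambda>f. blinfun_apply f x)"

definition reflexive_space :: "'a::real_normed_vector itself \<Rightarrow> bool" where
  "reflexive_space _ \<longleftrightarrow> surj (canon_embed :: 'a \<Rightarrow> _)"

end

theory Submission
  imports Defs
begin

(* The canonical embedding of X into X** is an isometry, by the Hahn-Banach theorem, obtained
   here via Zorn's lemma from one-dimensional extensions of norm-dominated functionals, which are
   encoded by their graphs in X \<times> R. For z in S_X the duality set J(z) is the face of the
   functional canon_embed z on the unit sphere of X*. *)

definition norm_dominated_subspace :: "('a::real_normed_vector \<times> real) set \<Rightarrow> bool" where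
  "norm_dominated_subspace G \<longleftrightarrow> subspace G \<and> (\<forall>(u, a) \<in> G. a \<le> norm u)"

lemma norm_dominated_subspace_unique:
  assumes G: "norm_dominated_subspace G" and "(u, a) \<in> G" "(u, b) \<in> G"
  shows "a = b"
proof -
  have "(0, a - b) \<in> G" "(0, b - a) \<in> G"
    using subspace_diff[of G "(u, a)" "(u, b)"] subspace_diff[of G "(u, b)" "(u, a)"] assms
    by (auto simp: norm_dominated_subspace_def)
  then have "a - b \<le> 0" "b - a \<le> 0"
    using G by (auto simp: norm_dominated_subspace_def)
  then show ?thesis by simp
qed

lemma norm_dominated_span_insert:
  assumes G: "norm_dominated_subspace G"
    and plus: "\<And>u a. (u, a) \<in> G \<Longrightarrow> a + c \<le> norm (u + y)"
    and minus: "\<And>u a. (u, a) \<in> G \<Longrightarrow> a - c \<le> norm (u - y)"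
  shows "norm_dominated_subspace (span (insert (y, c) G))"
proof -
  have sub: "subspace G" and dom: "\<And>u a. (u, a) \<in> G \<Longrightarrow> a \<le> norm u"
    using G by (auto simp: norm_dominated_subspace_def)
  have scaled: "a + s * d \<le> norm (u + s *\<^sub>R z)"
    if "0 < s" "(u, a) \<in> G"
      and dz: "\<And>u a. (u, a) \<in> G \<Longrightarrow> a + d \<le> norm (u + z)" for s d z u a
  proof -
    have "(inverse s *\<^sub>R u, inverse s * a) \<in> G"
      using subspace_scale[OF sub \<open>(u, a) \<in> G\<close>, of "inverse s"] by simp
    then have "s * (inverse s * a + d) \<le> s * norm (inverse s *\<^sub>R u + z)"
      using dz \<open>0 < s\<close> by (simp add: mult_left_mono)
    also have "\<dots> = norm (s *\<^sub>R (inverse s *\<^sub>R u + z))"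
      using \<open>0 < s\<close> by simp
    also have "\<dots> = norm (u + s *\<^sub>R z)"
      using \<open>0 < s\<close> by (simp add: scaleR_add_right)
    finally show ?thesis
      using \<open>0 < s\<close> by (simp add: algebra_simps)
  qed
  have line: "a + t * c \<le> norm (u + t *\<^sub>R y)" if "(u, a) \<in> G" for u a t
  proof (cases t "0::real" rule: linorder_cases)
    case less
    then show ?thesis
      using scaled[of "- t" u a "- c" "- y"] minus that by simp
  next
    case equal
    then show ?thesis using dom that by simp
  next
    case greater
    then show ?thesis using scaled[of t u a c y] plus that by simp
  qed
  have "b \<le> norm v" if vb: "(v, b) \<in> span (insert (y, c) G)" for v b
  proof -
    obtain t where "(v, b) - t *\<^sub>R (y, c) \<in> span G"
      using vb span_breakdown_eq by blast
    then have "(v - t *\<^sub>R y, b - t * c) \<in> G"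
      using sub by (simp flip: span_eq_iff)
    then show ?thesis
      using line[of "v - t *\<^sub>R y" "b - t * c" t] by simp
  qed
  then show ?thesis
    by (auto simp: norm_dominated_subspace_def)
qed

lemma norm_dominated_subspace_extend:
  assumes G: "norm_dominated_subspace G"
  obtains c where "norm_dominated_subspace (span (insert (y, c) G))"
proof -
  have sub: "subspace G" and dom: "\<And>u a. (u, a) \<in> G \<Longrightarrow> a \<le> norm u"
    using G by (auto simp: norm_dominated_subspace_def)
  have sep: "a - norm (u - y) \<le> norm (w + y) - b" if "(u, a) \<in> G" "(w, b) \<in> G" for u a w b
  proof -
    have "a + b \<le> norm (u + w)"
      using dom subspace_add[OF sub that] by simp
    also have "\<dots> \<le> norm (u - y) + norm (w + y)"
      using norm_triangle_ineq[of "u - y" "w + y"] by simp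
    finally show ?thesis by simp
  qed
  define c where "c = (SUP (u, a) \<in> G. a - norm (u - y))"
  have "(0, 0) \<in> G"
    using subspace_0[OF sub] by (simp add: zero_prod_def)
  then have bdd: "bdd_above ((\<lambda>(u, a). a - norm (u - y)) ` G)"
    using sep by (fastforce intro: bdd_aboveI)
  have "a - norm (u - y) \<le> c" if "(u, a) \<in> G" for u a
    unfolding c_def using cSUP_upper[OF that bdd] by simp
  moreover have "c \<le> norm (w + y) - b" if "(w, b) \<in> G" for w b
    unfolding c_def using \<open>(0, 0) \<in> G\<close> sep that by (force intro: cSUP_least)
  ultimately show ?thesis
    using norm_dominated_span_insert[OF G, of c y] that by fastforce
qed

lemma subspace_Union_chain:
  assumes "\<C> \<noteq> {}" "subset.chain {G. subspace G} \<C>"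
  shows "subspace (\<Union>\<C>)"
proof (rule subspaceI)
  have sub: "\<And>G. G \<in> \<C> \<Longrightarrow> subspace G"
    and cmp: "\<And>G H. G \<in> \<C> \<Longrightarrow> H \<in> \<C> \<Longrightarrow> G \<subseteq> H \<or> H \<subseteq> G"
    using assms(2) by (auto simp: subset_chain_def)
  show "0 \<in> \<Union>\<C>"
    using assms(1) sub subspace_0 by blast
  show "c *\<^sub>R p \<in> \<Union>\<C>" if "p \<in> \<Union>\<C>" for c p
    using that sub subspace_scale by blast
  show "p + q \<in> \<Union>\<C>" if pq: "p \<in> \<Union>\<C>" "q \<in> \<Union>\<C>" for p q
  proof -
    obtain G H where "G \<in> \<C>" "H \<in> \<C>" "p \<in> G" "q \<in> H"
      using pq by blast
    then show ?thesis
      using cmp[of G H] sub subspace_add by blast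
  qed
qed

lemma exists_total_norm_dominated_subspace:
  fixes x :: "'a::real_normed_vector"
  obtains M where "norm_dominated_subspace M" "(x, norm x) \<in> M" "\<And>y. \<exists>c. (y, c) \<in> M"
proof -
  define \<A> where "\<A> = {G. norm_dominated_subspace G \<and> (x, norm x) \<in> G}"
  have "\<forall>(u, a) \<in> span {(x, norm x)}. a \<le> norm u"
    by (auto simp: span_singleton abs_mult intro: mult_right_mono)
  then have "span {(x, norm x)} \<in> \<A>"
    by (simp add: \<A>_def norm_dominated_subspace_def span_base)
  then have "\<exists>M\<in>\<A>. \<forall>G\<in>\<A>. M \<subseteq> G \<longrightarrow> G = M"
  proof (intro subset_Zorn_nonempty)
    fix \<C> assume ne: "\<C> \<noteq> {}" and chain: "subset.chain \<A> \<C>"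
    then have "\<C> \<subseteq> \<A>"
      by (simp add: subset_chain_def)
    have "subset.chain {G. subspace G} \<C>"
      using chain by (auto simp: subset_chain_def \<A>_def norm_dominated_subspace_def)
    then have "subspace (\<Union>\<C>)"
      using subspace_Union_chain ne by blast
    moreover have "\<forall>(u, a) \<in> \<Union>\<C>. a \<le> norm u"
      using \<open>\<C> \<subseteq> \<A>\<close> by (auto simp: \<A>_def norm_dominated_subspace_def)
    moreover have "(x, norm x) \<in> \<Union>\<C>"
      using ne \<open>\<C> \<subseteq> \<A>\<close> by (auto simp: \<A>_def)
    ultimately show "\<Union>\<C> \<in> \<A>"
      by (simp add: \<A>_def norm_dominated_subspace_def)
  qed blast
  then obtain M where M: "norm_dominated_subspace M" "(x, norm x) \<in> M"
    and maximal: "\<And>G. norm_dominated_subspace G \<Longrightarrow> M \<subseteq> G \<Longrightarrow> G = M"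
    by (auto simp: \<A>_def)
  have "\<exists>c. (y, c) \<in> M" for y
  proof -
    obtain c where "norm_dominated_subspace (span (insert (y, c) M))"
      using norm_dominated_subspace_extend[OF M(1)] .
    then have "span (insert (y, c) M) = M"
      using maximal span_superset by blast
    then show ?thesis
      using span_base[of "(y, c)" "insert (y, c) M"] by auto
  qed
  then show ?thesis
    using that M by blast
qed

lemma norm_dominated_subspace_graph:
  assumes M: "norm_dominated_subspace M" and total: "\<And>y. \<exists>c. (y, c) \<in> M"
  obtains f :: "'a::real_normed_vector \<Rightarrow>\<^sub>L real" where "norm f \<le> 1" "\<And>u. (u, f u) \<in> M"
proof -
  have sub: "subspace M" and dom: "\<And>u a. (u, a) \<in> M \<Longrightarrow> a \<le> norm u"
    using M by (auto simp: norm_dominated_subspace_def)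
  define f where "f u = (SOME c. (u, c) \<in> M)" for u
  have graph: "(u, f u) \<in> M" for u
    unfolding f_def using total by (rule someI_ex)
  have f_eq: "f u = a" if "(u, a) \<in> M" for u a
    using norm_dominated_subspace_unique[OF M graph that] .
  have "f (u + w) = f u + f w" for u w
    using f_eq subspace_add[OF sub graph graph] by simp
  moreover have "f (t *\<^sub>R u) = t *\<^sub>R f u" for t u
    using f_eq subspace_scale[OF sub graph] by simp
  moreover have bound: "norm (f u) \<le> norm u * 1" for u
    using dom[OF graph, of u] dom[OF graph, of "- u"] f_eq subspace_neg[OF sub graph, of u]
    by simp
  ultimately have "bounded_linear f"
    by (rule bounded_linear_intro)
  note Blinfun_f = bounded_linear_Blinfun_apply[OF this]
  show ?thesis
  proof
    show "norm (Blinfun f) \<le> 1"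
      using bound by (intro norm_blinfun_bound) (simp_all add: Blinfun_f)
    show "(u, Blinfun f u) \<in> M" for u
      using graph by (simp add: Blinfun_f)
  qed
qed

lemma exists_norming_functional:
  fixes x :: "'a::real_normed_vector"
  obtains f :: "'a \<Rightarrow>\<^sub>L real" where "norm f \<le> 1" "f x = norm x"
proof -
  obtain M where M: "norm_dominated_subspace M" "(x, norm x) \<in> M" "\<And>y. \<exists>c. (y, c) \<in> M"
    using exists_total_norm_dominated_subspace[of x] by blast
  obtain f :: "'a \<Rightarrow>\<^sub>L real" where "norm f \<le> 1" "\<And>u. (u, f u) \<in> M"
    using norm_dominated_subspace_graph[OF M(1,3)] by blast
  then show ?thesis
    using that norm_dominated_subspace_unique[OF M(1) _ M(2)] by blast
qed

lemma canon_embed_apply [simp]: "canon_embed x f = f x"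
  unfolding canon_embed_def
  by (simp add: bounded_linear_Blinfun_apply[OF blinfun.bounded_linear_left])

lemma canon_embed_diff: "canon_embed (x - y) = canon_embed x - canon_embed y"
  by (rule blinfun_eqI) (simp add: blinfun.diff_right minus_blinfun.rep_eq)

lemma norm_canon_embed [simp]: "norm (canon_embed x) = norm x"
proof (rule antisym)
  show "norm (canon_embed x) \<le> norm x"
    by (rule norm_blinfun_bound) (simp_all, metis norm_blinfun mult.commute real_norm_def)
  obtain f :: "'a \<Rightarrow>\<^sub>L real" where f: "norm f \<le> 1" "f x = norm x"
    by (rule exists_norming_functional)
  have "norm x = norm (canon_embed x f)"
    using f by simp
  also have "\<dots> \<le> norm (canon_embed x) * norm f"
    by (rule norm_blinfun)
  also have "\<dots> \<le> norm (canon_embed x)"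
    using f(1) by (simp add: mult_left_le)
  finally show "norm x \<le> norm (canon_embed x)" .
qed

lemma dist_canon_embed [simp]: "dist (canon_embed x) (canon_embed y) = dist x y"
  by (simp add: dist_norm flip: canon_embed_diff)

lemma diameter_isometric_image:
  assumes "\<And>x y. x \<in> S \<Longrightarrow> y \<in> S \<Longrightarrow> dist (f x) (f y) = dist x y"
  shows "diameter (f ` S) = diameter S"
proof -
  have "(\<lambda>(x, y). dist x y) ` (f ` S \<times> f ` S) = (\<lambda>(x, y). dist x y) ` (S \<times> S)"
    using assms by (force simp: image_iff)
  then show ?thesis
    by (simp add: diameter_def)
qed

definition unit_face :: "('a::real_normed_vector \<Rightarrow>\<^sub>L real) \<Rightarrow> 'a set" where
  "unit_face \<phi> = {z. norm z = 1 \<and> \<phi> z = 1}"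

lemma eps_rotund_iff:
  "eps_rotund \<epsilon> TYPE('a::real_normed_vector) \<longleftrightarrow>
     (\<forall>\<phi>::'a \<Rightarrow>\<^sub>L real. norm \<phi> = 1 \<longrightarrow> diameter (unit_face \<phi>) \<le> \<epsilon>)"
  by (simp add: eps_rotund_def unit_face_def)

lemma bounded_duality_set: "bounded (duality_set z)"
  by (rule bounded_subset[OF bounded_cball[of 0 1]]) (auto simp: duality_set_def)

lemma duality_set_eq_unit_face_canon_embed:
  "norm z = 1 \<Longrightarrow> duality_set z = unit_face (canon_embed z)"
  by (auto simp: duality_set_def unit_face_def)

lemma canon_embed_image_unit_face:
  "norm \<phi> = 1 \<Longrightarrow> canon_embed ` unit_face \<phi> = duality_set \<phi> \<inter> range canon_embed"
  by (auto simp: duality_set_def unit_face_def)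

lemma eps_rotund_if_dual_eps_smooth:
  assumes "eps_smooth \<epsilon> TYPE('a::real_normed_vector \<Rightarrow>\<^sub>L real)"
  shows "eps_rotund \<epsilon> TYPE('a)"
  unfolding eps_rotund_iff
proof (intro allI impI)
  fix \<phi> :: "'a \<Rightarrow>\<^sub>L real" assume "norm \<phi> = 1"
  have "diameter (unit_face \<phi>) = diameter (canon_embed ` unit_face \<phi>)"
    by (simp add: diameter_isometric_image)
  also have "\<dots> \<le> diameter (duality_set \<phi>)"
    using \<open>norm \<phi> = 1\<close>
    by (intro diameter_subset bounded_duality_set) (simp add: canon_embed_image_unit_face)
  also have "\<dots> \<le> \<epsilon>"
    using assms \<open>norm \<phi> = 1\<close> by (simp add: eps_smooth_def)
  finally show "diameter (unit_face \<phi>) \<le> \<epsilon>" .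
qed

lemma eps_smooth_if_dual_eps_rotund:
  assumes "eps_rotund \<epsilon> TYPE('a::real_normed_vector \<Rightarrow>\<^sub>L real)"
  shows "eps_smooth \<epsilon> TYPE('a)"
  using assms by (simp add: eps_smooth_def eps_rotund_iff duality_set_eq_unit_face_canon_embed)

lemma dual_eps_rotund_if_eps_smooth:
  assumes "reflexive_space TYPE('a::real_normed_vector)" and "eps_smooth \<epsilon> TYPE('a)"
  shows "eps_rotund \<epsilon> TYPE('a \<Rightarrow>\<^sub>L real)"
  unfolding eps_rotund_iff
proof (intro allI impI)
  fix \<Phi> :: "('a \<Rightarrow>\<^sub>L real) \<Rightarrow>\<^sub>L real" assume "norm \<Phi> = 1"
  obtain z :: 'a where "\<Phi> = canon_embed z"
    using assms(1) by (auto simp: reflexive_space_def)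
  with \<open>norm \<Phi> = 1\<close> assms(2) show "diameter (unit_face \<Phi>) \<le> \<epsilon>"
    by (simp add: eps_smooth_def flip: duality_set_eq_unit_face_canon_embed)
qed

lemma dual_eps_smooth_if_eps_rotund:
  assumes "reflexive_space TYPE('a::real_normed_vector)" and "eps_rotund \<epsilon> TYPE('a)"
  shows "eps_smooth \<epsilon> TYPE('a \<Rightarrow>\<^sub>L real)"
  unfolding eps_smooth_def
proof (intro allI impI)
  fix \<phi> :: "'a \<Rightarrow>\<^sub>L real" assume "norm \<phi> = 1"
  then have "duality_set \<phi> = canon_embed ` unit_face \<phi>"
    using assms(1) by (simp add: canon_embed_image_unit_face reflexive_space_def)
  also have "diameter \<dots> = diameter (unit_face \<phi>)"
    by (simp add: diameter_isometric_image)
  finally show "diameter (duality_set \<phi>) \<le> \<epsilon>"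
    using assms(2) \<open>norm \<phi> = 1\<close> by (simp add: eps_rotund_iff)
qed

theorem theorem2p13:
  fixes \<epsilon> :: real
  assumes "0 \<le> \<epsilon>" and "\<epsilon> < 2"
  shows "(eps_smooth \<epsilon> TYPE('a::real_normed_vector \<Rightarrow>\<^sub>L real) \<longrightarrow> eps_rotund \<epsilon> TYPE('a))
       \<and> (eps_rotund \<epsilon> TYPE('a \<Rightarrow>\<^sub>L real) \<longrightarrow> eps_smooth \<epsilon> TYPE('a))
       \<and> (reflexive_space TYPE('a) \<longrightarrow>
            ((eps_smooth \<epsilon> TYPE('a) \<longleftrightarrow> eps_rotund \<epsilon> TYPE('a \<Rightarrow>\<^sub>L real))
             \<and> (eps_rotund \<epsilon> TYPE('a) \<longleftrightarrow> eps_smooth \<epsilon> TYPE('a \<Rightarrow>\<^sub>L real))))"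
  using eps_rotund_if_dual_eps_smooth eps_smooth_if_dual_eps_rotund
    dual_eps_rotund_if_eps_smooth dual_eps_smooth_if_eps_rotund
  by blast

end
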